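(* Let $\alpha,\beta,\gamma,x\in\mathbb{N}_0$ with $(\alpha,\beta,\gamma,x)\neq(0,0,0,0)$, let $\lambda$ be a nonnegative integer and $n$ a nonnegative integer. Then $$A^{\lambda,x}_{n+1}(\alpha,\beta,\gamma)=\gamma\, A^{\lambda,x}_n(\alpha,\beta,\gamma+\alpha)+x\lambda\beta\sum_{k=0}^{n}\binom{n}{k}A^{1,x}_{k}(\alpha,\beta,\gamma+\beta+\alpha)\,A^{\lambda,x}_{n-k}(\alpha,\beta,0).$$
   Context: For a number $t$ and $\alpha$, the generalised factorial is $(t|\alpha)_n=\prod_{j=0}^{n-1}(t-j\alpha)$ for $n\ge 1$ and $(t|\alpha)_0=1$. For parameters $\alpha,\beta,\gamma$, the generalised Stirling numbers $S(n,k,\alpha,\beta,\gamma)$ ($0\le k\le n$) are defined by the polynomial identity $(t|\alpha)_n=\sum_{k=0}^{n}S(n,k,\alpha,\beta,\gamma)\,(t-\gamma|\beta)_k$ in the variable $t$. For a nonnegative integer $\lambda$ put $\binom{k+\lambda-1}{k}=\lambda(\lambda+1)\cdots(\lambda+k-1)/k!$ (equal to $1$ for $k=0$). Define $$A^{\lambda,x}_n(\alpha,\beta,\gamma)=\sum_{k=0}^{n}\binom{k+\lambda-1}{k}(-1)^{n+k}\beta^k k!\,S(n,k,\alpha,-\beta,-\gamma)\,x^k .$$ *)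

theory Defs
  imports Complex_Main
begin

definition gfact :: "real \<Rightarrow> real \<Rightarrow> nat \<Rightarrow> real" where
  "gfact t a n = (\<Prod>j<n. t - real j * a)"

text \<open>The coefficient family is
  normalised to vanish for k > n so that it is uniquely determined.\<close>
definition gstirling :: "nat \<Rightarrow> nat \<Rightarrow> real \<Rightarrow> real \<Rightarrow> real \<Rightarrow> real" where
  "gstirling n k a b c =
     (THE s :: nat \<Rightarrow> real. (\<forall>j>n. s j = 0) \<and>
        (\<forall>t. gfact t a n = (\<Sum>i\<le>n. s i * gfact (t - c) b i))) k"

text \<open>A^{lam,x}_n(a,b,c); the binomial (k+lam-1 choose k) = lam(lam+1)...(lam+k-1)/k!.\<close>
definition Apoly :: "nat \<Rightarrow> real \<Rightarrow> nat \<Rightarrow> real \<Rightarrow> real \<Rightarrow> real \<Rightarrow> real" where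
  "Apoly lam x n a b c =
     (\<Sum>k\<le>n. (pochhammer (real lam) k / fact k) * (-1) ^ (n + k) * b ^ k * fact k
              * gstirling n k a (- b) (- c) * x ^ k)"

end

theory Submission
  imports Defs "HOL-Computational_Algebra.Polynomial"
begin

text \<open>
  Write \<open>A\<close> as \<open>\<Sum>k. w(k) a(n,k,\<gamma>)\<close> with weights \<open>w(k) = (k+\<lambda>-1 choose k) x^k\<close> and
  coefficients \<open>a(n,k,\<gamma>) = (-1)^(n+k) \<beta>^k k! S(n,k,\<alpha>,-\<beta>,-\<gamma>)\<close>. The Stirling recurrence
  gives three rules for these coefficients: the first-step recurrence
  \<open>a(n+1,k,\<gamma>) = (\<gamma>+k\<beta>) a(n,k,\<gamma>+\<alpha>) + k\<beta> a(n,k-1,\<gamma>+\<alpha>)\<close>, the shift rule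
  \<open>a(n,k,\<gamma>+\<beta>) = a(n,k+1,\<gamma>) + a(n,k,\<gamma>)\<close>, and the binomial convolution
  \<open>\<Sum>m. (n choose m) a(m,k,\<gamma>) a(n-m,l,\<delta>) = a(n,k+l,\<gamma>+\<delta>)\<close>.
  The first two split \<open>A\<^sub>n\<^sub>+\<^sub>1\<close> into \<open>\<gamma> A\<^sub>n(\<gamma>+\<alpha>)\<close> plus \<open>\<beta>\<close> times a sum with the
  differentiated weights \<open>(m+1) w(m+1)\<close>. By the hockey-stick identity these are \<open>x\<lambda>\<close> times
  the Cauchy product of \<open>x^k\<close> and \<open>w(k)\<close>, and the convolution turns that sum into the
  binomial sum of the theorem.
\<close>

fun gstirling_rec :: "real \<Rightarrow> real \<Rightarrow> real \<Rightarrow> nat \<Rightarrow> nat \<Rightarrow> real" where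
  "gstirling_rec a b c 0 k = (if k = 0 then 1 else 0)"
| "gstirling_rec a b c (Suc n) 0 = (c - real n * a) * gstirling_rec a b c n 0"
| "gstirling_rec a b c (Suc n) (Suc k) = gstirling_rec a b c n k
     + (c + real (Suc k) * b - real n * a) * gstirling_rec a b c n (Suc k)"

lemma gstirling_rec_eq_0: "n < k \<Longrightarrow> gstirling_rec a b c n k = 0"
  by (induction a b c n k rule: gstirling_rec.induct) auto

lemma gfact_Suc: "gfact t a (Suc n) = gfact t a n * (t - real n * a)"
  by (simp add: gfact_def)

lemma gfact_eq_sum_gstirling_rec:
  "gfact t a n = (\<Sum>i\<le>n. gstirling_rec a b c n i * gfact (t - c) b i)"
proof (induction n)
  case 0
  then show ?case by (simp add: gfact_def)
next
  case (Suc n)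
  let ?S = "gstirling_rec a b c" and ?P = "gfact (t - c) b"
  \<comment> \<open>write the new factor \<open>t - n a\<close> as \<open>(t - c - i b) + (c + i b - n a)\<close>; the first summand
    turns the \<open>i\<close>-th basis polynomial into the \<open>(i+1)\<close>-th\<close>
  have "gfact t a (Suc n) = (\<Sum>i\<le>n. ?S n i * ?P (Suc i)) + (\<Sum>i\<le>n. (c + real i * b - real n * a) * ?S n i * ?P i)"
    unfolding gfact_Suc Suc sum_distrib_right sum.distrib[symmetric]
    by (rule sum.cong) (simp_all add: gfact_Suc algebra_simps)
  also have "(\<Sum>i\<le>n. ?S n i * ?P (Suc i)) = (\<Sum>i\<le>Suc n. (if i = 0 then 0 else ?S n (i - 1)) * ?P i)"
    by (subst sum.atMost_Suc_shift) simp
  also have "(\<Sum>i\<le>n. (c + real i * b - real n * a) * ?S n i * ?P i)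
      = (\<Sum>i\<le>Suc n. (c + real i * b - real n * a) * ?S n i * ?P i)"
    by (simp add: gstirling_rec_eq_0)
  also have "(\<Sum>i\<le>Suc n. (if i = 0 then 0 else ?S n (i - 1)) * ?P i)
      + (\<Sum>i\<le>Suc n. (c + real i * b - real n * a) * ?S n i * ?P i) = (\<Sum>i\<le>Suc n. ?S (Suc n) i * ?P i)"
    unfolding sum.distrib[symmetric]
    by (rule sum.cong) (auto simp: algebra_simps gr0_conv_Suc)
  finally show ?case .
qed

lemma gfact_basis_independent:
  assumes "\<forall>t. (\<Sum>i\<le>n. d i * gfact (t - c) b i) = 0" and "i \<le> n"
  shows "d i = 0"
  using assms
proof (induction n)
  case 0
  then show ?case by (simp add: gfact_def)
next
  case (Suc n)
  define p where "p i = (\<Prod>j<i. [:- c - real j * b, 1:])" for i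
  have poly_p: "poly (p i) t = gfact (t - c) b i" for i t
    by (simp add: p_def gfact_def poly_prod algebra_simps)
  have deg_p: "degree (p i) = i" for i
    unfolding p_def by (subst degree_prod_sum_eq) auto
  have lead_p: "coeff (p i) i = 1" for i
    using lead_coeff_prod[of "\<lambda>j. [:- c - real j * b, 1:]" "{..<i}"] by (simp add: p_def [symmetric] deg_p)
  let ?q = "\<Sum>i\<le>Suc n. smult (d i) (p i)"
  have "poly ?q t = 0" for t
    unfolding poly_sum poly_smult poly_p using Suc.prems(1) by blast
  then have "?q = 0"
    using poly_all_0_iff_0 by blast
  then have "coeff ?q (Suc n) = 0"
    by (metis coeff_0)
  moreover have "coeff ?q (Suc n) = d (Suc n)"
    by (simp add: coeff_sum lead_p deg_p coeff_eq_0)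
  ultimately have top: "d (Suc n) = 0" by simp
  with Suc.prems(1) have "\<forall>t. (\<Sum>i\<le>n. d i * gfact (t - c) b i) = 0" by simp
  with Suc.IH top show ?case using Suc.prems(2) le_Suc_eq by blast
qed

lemma gstirling_eqI:
  assumes vanish: "\<forall>j>n. s j = 0"
    and expansion: "\<forall>t. gfact t a n = (\<Sum>i\<le>n. s i * gfact (t - c) b i)"
  shows "gstirling n k a b c = s k"
proof -
  have "(THE s. (\<forall>j>n. s j = 0) \<and> (\<forall>t. gfact t a n = (\<Sum>i\<le>n. s i * gfact (t - c) b i))) = s"
  proof (rule the_equality)
    fix s' assume s': "(\<forall>j>n. s' j = 0) \<and> (\<forall>t. gfact t a n = (\<Sum>i\<le>n. s' i * gfact (t - c) b i))"
    have "s' i = s i" for i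
    proof (cases "i \<le> n")
      case True
      have "\<forall>t. (\<Sum>i\<le>n. (s' i - s i) * gfact (t - c) b i) = 0"
        using s' expansion by (simp add: left_diff_distrib sum_subtractf)
      with True show ?thesis
        using gfact_basis_independent by fastforce
    next
      case False
      with s' vanish show ?thesis by simp
    qed
    then show "s' = s" ..
  qed (use assms in blast)
  then show ?thesis
    unfolding gstirling_def by simp
qed

lemma gstirling_eq_rec: "gstirling n k a b c = gstirling_rec a b c n k"
  by (rule gstirling_eqI) (use gstirling_rec_eq_0 gfact_eq_sum_gstirling_rec in auto)

definition acoeff :: "real \<Rightarrow> real \<Rightarrow> real \<Rightarrow> nat \<Rightarrow> nat \<Rightarrow> real" where
  "acoeff a b c n k = (-1) ^ (n + k) * b ^ k * fact k * gstirling n k a (- b) (- c)"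

lemma acoeff_0 [simp]: "acoeff a b c 0 k = (if k = 0 then 1 else 0)"
  by (simp add: acoeff_def gstirling_eq_rec)

lemma acoeff_Suc_0 [simp]: "acoeff a b c (Suc n) 0 = (c + real n * a) * acoeff a b c n 0"
  by (simp add: acoeff_def gstirling_eq_rec algebra_simps)

lemma acoeff_Suc_Suc [simp]:
  "acoeff a b c (Suc n) (Suc k) =
     real (Suc k) * b * acoeff a b c n k + (c + real (Suc k) * b + real n * a) * acoeff a b c n (Suc k)"
  by (simp add: acoeff_def gstirling_eq_rec algebra_simps)

lemma acoeff_eq_0: "n < k \<Longrightarrow> acoeff a b c n k = 0"
  by (simp add: acoeff_def gstirling_eq_rec gstirling_rec_eq_0)

lemma Apoly_eq_sum_acoeff:
  "Apoly lam x n a b c = (\<Sum>k\<le>n. pochhammer (real lam) k / fact k * x ^ k * acoeff a b c n k)"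
  unfolding Apoly_def acoeff_def by (simp add: algebra_simps)

lemma acoeff_Suc_shift:
  "acoeff a b c (Suc n) k =
     (c + real k * b) * acoeff a b (c + a) n k + real k * b * acoeff a b (c + a) n (k - 1)"
proof (induction n arbitrary: c k)
  case 0
  then show ?case by (cases k) auto
next
  case (Suc n)
  show ?case
  proof (cases k)
    case 0
    show ?thesis
      unfolding 0 acoeff_Suc_0[of a b c "Suc n"] Suc.IH[of c 0] by (simp add: algebra_simps)
  next
    case (Suc j)
    show ?thesis
      unfolding Suc acoeff_Suc_Suc[of a b c "Suc n"] Suc.IH[of c j] Suc.IH[of c "Suc j"]
      by (cases j) (simp_all add: algebra_simps)
  qed
qed

lemma acoeff_plus_b: "acoeff a b (c + b) n k = acoeff a b c n (Suc k) + acoeff a b c n k"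
proof (induction n arbitrary: c k)
  case 0
  then show ?case by simp
next
  case (Suc n)
  have shift: "c + b + a = (c + a) + b" by simp
  show ?case
    unfolding acoeff_Suc_shift[of a b _ n] shift Suc.IH[of "c + a"]
    by (cases k) (simp_all add: algebra_simps)
qed

lemma binomial_sum_Suc:
  fixes f g :: "nat \<Rightarrow> 'a::comm_semiring_1"
  shows "(\<Sum>m\<le>Suc n. of_nat (Suc n choose m) * f m * g (Suc n - m)) =
    (\<Sum>m\<le>n. of_nat (n choose m) * f (Suc m) * g (n - m)) +
    (\<Sum>m\<le>n. of_nat (n choose m) * f m * g (Suc n - m))"
proof -
  have "(\<Sum>m\<le>n. of_nat (n choose m) * f m * g (Suc n - m)) =
      (\<Sum>m\<le>Suc n. of_nat (n choose m) * f m * g (Suc n - m))"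
    by (simp add: binomial_eq_0)
  also have "\<dots> = f 0 * g (Suc n) + (\<Sum>m\<le>n. of_nat (n choose Suc m) * f (Suc m) * g (n - m))"
    by (subst sum.atMost_Suc_shift) simp
  finally show ?thesis
    by (subst sum.atMost_Suc_shift) (simp add: sum.distrib algebra_simps)
qed

lemma acoeff_binomial_convolution:
  "(\<Sum>m\<le>n. real (n choose m) * acoeff a b c m k * acoeff a b d (n - m) l) =
     acoeff a b (c + d) n (k + l)"
proof (induction n arbitrary: c d k l)
  case 0
  then show ?case by simp
next
  case (Suc n)
  have first: "(\<Sum>m\<le>n. real (n choose m) * acoeff a b c (Suc m) k * acoeff a b d (n - m) l) =
      (c + real k * b) * acoeff a b (c + d + a) n (k + l) + real k * b * acoeff a b (c + d + a) n (k - 1 + l)"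
  proof -
    have "(\<Sum>m\<le>n. real (n choose m) * acoeff a b c (Suc m) k * acoeff a b d (n - m) l) =
        (c + real k * b) * (\<Sum>m\<le>n. real (n choose m) * acoeff a b (c + a) m k * acoeff a b d (n - m) l)
        + real k * b * (\<Sum>m\<le>n. real (n choose m) * acoeff a b (c + a) m (k - 1) * acoeff a b d (n - m) l)"
      unfolding acoeff_Suc_shift sum_distrib_left sum.distrib[symmetric]
      by (rule sum.cong) (auto simp: algebra_simps)
    then show ?thesis
      unfolding Suc.IH by (simp add: algebra_simps)
  qed
  have second: "(\<Sum>m\<le>n. real (n choose m) * acoeff a b c m k * acoeff a b d (Suc n - m) l) =
      (d + real l * b) * acoeff a b (c + d + a) n (k + l) + real l * b * acoeff a b (c + d + a) n (k + (l - 1))"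
  proof -
    have "(\<Sum>m\<le>n. real (n choose m) * acoeff a b c m k * acoeff a b d (Suc n - m) l) =
        (d + real l * b) * (\<Sum>m\<le>n. real (n choose m) * acoeff a b c m k * acoeff a b (d + a) (n - m) l)
        + real l * b * (\<Sum>m\<le>n. real (n choose m) * acoeff a b c m k * acoeff a b (d + a) (n - m) (l - 1))"
      unfolding sum_distrib_left sum.distrib[symmetric]
      by (rule sum.cong) (auto simp: algebra_simps Suc_diff_le acoeff_Suc_shift)
    then show ?thesis
      unfolding Suc.IH by (simp add: algebra_simps)
  qed
  show ?case
    unfolding binomial_sum_Suc[where f = "\<lambda>m. acoeff a b c m k" and g = "\<lambda>m. acoeff a b d m l"]
      first second acoeff_Suc_shift[of a b "c + d" n]
    by (cases k; cases l) (auto simp: algebra_simps)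
qed

definition acoeff_sum :: "(nat \<Rightarrow> real) \<Rightarrow> real \<Rightarrow> real \<Rightarrow> real \<Rightarrow> nat \<Rightarrow> real" where
  "acoeff_sum w a b c n = (\<Sum>k\<le>n. w k * acoeff a b c n k)"

lemma acoeff_sum_eq_sum_atMost:
  "n \<le> N \<Longrightarrow> acoeff_sum w a b c n = (\<Sum>k\<le>N. w k * acoeff a b c n k)"
  unfolding acoeff_sum_def by (rule sum.mono_neutral_left) (auto simp: acoeff_eq_0)

lemma acoeff_sum_cmult: "acoeff_sum (\<lambda>k. r * w k) a b c n = r * acoeff_sum w a b c n"
  by (simp add: acoeff_sum_def sum_distrib_left mult.assoc)

lemma acoeff_sum_Suc:
  "acoeff_sum w a b c (Suc n) =
     c * acoeff_sum w a b (c + a) n + b * acoeff_sum (\<lambda>m. real (Suc m) * w (Suc m)) a b (c + a + b) n"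
proof -
  have "acoeff_sum w a b c (Suc n) =
      c * (\<Sum>k\<le>Suc n. w k * acoeff a b (c + a) n k)
      + b * (\<Sum>k\<le>Suc n. real k * w k * (acoeff a b (c + a) n k + acoeff a b (c + a) n (k - 1)))"
    unfolding acoeff_sum_def acoeff_Suc_shift sum_distrib_left sum.distrib[symmetric]
    by (rule sum.cong) (simp_all add: algebra_simps)
  also have "(\<Sum>k\<le>Suc n. w k * acoeff a b (c + a) n k) = acoeff_sum w a b (c + a) n"
    by (rule acoeff_sum_eq_sum_atMost[symmetric]) simp
  also have "(\<Sum>k\<le>Suc n. real k * w k * (acoeff a b (c + a) n k + acoeff a b (c + a) n (k - 1))) =
      acoeff_sum (\<lambda>m. real (Suc m) * w (Suc m)) a b (c + a + b) n"
    by (subst sum.atMost_Suc_shift) (simp add: acoeff_sum_def acoeff_plus_b)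
  finally show ?thesis .
qed

lemma acoeff_sum_binomial_convolution:
  "(\<Sum>k\<le>n. real (n choose k) * acoeff_sum u a b c k * acoeff_sum v a b d (n - k)) =
     acoeff_sum (\<lambda>m. \<Sum>i\<le>m. u i * v (m - i)) a b (c + d) n"
proof -
  let ?g = "\<lambda>i j. u i * v j * acoeff a b (c + d) n (i + j)"
  have "(\<Sum>k\<le>n. real (n choose k) * acoeff_sum u a b c k * acoeff_sum v a b d (n - k)) =
      (\<Sum>k\<le>n. \<Sum>i\<le>n. \<Sum>j\<le>n. u i * v j * (real (n choose k) * acoeff a b c k i * acoeff a b d (n - k) j))"
    by (intro sum.cong) (auto simp: acoeff_sum_eq_sum_atMost[where N = n] sum_product sum_distrib_left mult_ac)
  also have "\<dots> = (\<Sum>i\<le>n. \<Sum>j\<le>n. \<Sum>k\<le>n. u i * v j * (real (n choose k) * acoeff a b c k i * acoeff a b d (n - k) j))"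
    by (subst sum.swap) (rule sum.cong[OF refl], rule sum.swap)
  also have "\<dots> = (\<Sum>i\<le>n. \<Sum>j\<le>n. ?g i j)"
    by (simp only: sum_distrib_left[symmetric] acoeff_binomial_convolution)
  also have "\<dots> = (\<Sum>(i, j)\<in>{(i, j). i + j \<le> n}. ?g i j)"
    unfolding sum.cartesian_product
    by (rule sum.mono_neutral_right) (auto simp: acoeff_eq_0 simp flip: not_less)
  also have "\<dots> = acoeff_sum (\<lambda>m. \<Sum>i\<le>m. u i * v (m - i)) a b (c + d) n"
    unfolding sum.triangle_reindex_eq acoeff_sum_def by (simp add: sum_distrib_right)
  finally show ?thesis .
qed

lemma sum_pochhammer_div_fact:
  fixes r :: "'a::field_char_0"
  shows "r * (\<Sum>q\<le>m. pochhammer r q / fact q) = of_nat (Suc m) * pochhammer r (Suc m) / fact (Suc m)"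
proof (induction m)
  case 0
  then show ?case by simp
next
  case (Suc m)
  have "r * (\<Sum>q\<le>Suc m. pochhammer r q / fact q) = (r + of_nat (Suc m)) * pochhammer r (Suc m) / fact (Suc m)"
    using Suc.IH by (simp add: algebra_simps add_divide_distrib)
  also have "\<dots> = of_nat (Suc (Suc m)) * pochhammer r (Suc (Suc m)) / fact (Suc (Suc m))"
    by (simp add: pochhammer_Suc[of r "Suc m"] del: of_nat_Suc)
  finally show ?case .
qed

lemma Apoly_Suc:
  "Apoly lam x (Suc n) a b c =
     c * Apoly lam x n a b (c + a)
   + x * real lam * b * (\<Sum>k\<le>n. real (n choose k) * Apoly 1 x k a b (c + b + a) * Apoly lam x (n - k) a b 0)"
proof -
  define w where "w k = pochhammer (real lam) k / fact k * x ^ k" for k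
  have Apoly_w: "Apoly lam x m a b d = acoeff_sum w a b d m" for m d
    by (simp add: Apoly_eq_sum_acoeff acoeff_sum_def w_def mult_ac)
  have Apoly_1: "Apoly 1 x m a b d = acoeff_sum (\<lambda>k. x ^ k) a b d m" for m d
    by (simp add: Apoly_eq_sum_acoeff acoeff_sum_def pochhammer_fact[symmetric])
  have deriv_w: "real (Suc m) * w (Suc m) = x * real lam * (\<Sum>i\<le>m. x ^ i * w (m - i))" for m
  proof -
    have "(\<Sum>i\<le>m. x ^ i * w (m - i)) = x ^ m * (\<Sum>i\<le>m. pochhammer (real lam) (m - i) / fact (m - i))"
      unfolding sum_distrib_left w_def
      by (intro sum.cong) (auto simp: power_add[symmetric] mult_ac)
    also have "(\<Sum>i\<le>m. pochhammer (real lam) (m - i) / fact (m - i)) = (\<Sum>q\<le>m. pochhammer (real lam) q / fact q)"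
      using sum.atLeastAtMost_rev[of "\<lambda>q. pochhammer (real lam) q / fact q" 0 m] by (simp add: atLeast0AtMost)
    finally show ?thesis
      using sum_pochhammer_div_fact[of "real lam" m] by (simp add: w_def mult_ac)
  qed
  have "Apoly lam x (Suc n) a b c =
      c * Apoly lam x n a b (c + a) + b * acoeff_sum (\<lambda>m. real (Suc m) * w (Suc m)) a b (c + a + b) n"
    by (simp add: Apoly_w acoeff_sum_Suc)
  also have "acoeff_sum (\<lambda>m. real (Suc m) * w (Suc m)) a b (c + a + b) n =
      x * real lam * acoeff_sum (\<lambda>m. \<Sum>i\<le>m. x ^ i * w (m - i)) a b (c + b + a + 0) n"
    by (simp only: deriv_w acoeff_sum_cmult) (simp add: add_ac)
  also have "acoeff_sum (\<lambda>m. \<Sum>i\<le>m. x ^ i * w (m - i)) a b (c + b + a + 0) n =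
      (\<Sum>k\<le>n. real (n choose k) * Apoly 1 x k a b (c + b + a) * Apoly lam x (n - k) a b 0)"
    by (simp only: Apoly_1 Apoly_w acoeff_sum_binomial_convolution)
  finally show ?thesis
    by (simp add: mult_ac)
qed

theorem theorem4:
  fixes \<alpha> \<beta> \<gamma> x lam n :: nat
  assumes "(\<alpha>, \<beta>, \<gamma>, x) \<noteq> (0, 0, 0, 0)"
  shows "Apoly lam (real x) (Suc n) (real \<alpha>) (real \<beta>) (real \<gamma>) =
           real \<gamma> * Apoly lam (real x) n (real \<alpha>) (real \<beta>) (real \<gamma> + real \<alpha>)
         + real x * real lam * real \<beta> *
           (\<Sum>k\<le>n. real (n choose k)
                 * Apoly 1 (real x) k (real \<alpha>) (real \<beta>) (real \<gamma> + real \<beta> + real \<alpha>)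
                 * Apoly lam (real x) (n - k) (real \<alpha>) (real \<beta>) 0)"
  by (rule Apoly_Suc)

end
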